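(* In the Bernoulli Matching model with $k=2$ and reach $r=1$, \[ \sum_{n\ge 0}\mathbf{EL}^B_{n,2,1}\,a^n \text{ has asymptotics } \quad \mathbf{EL}^B_{n,2,1}=\frac{8}{11}n-\frac{32}{121}+O\!\left(n\,2^{-2n}\right)\quad (n\to\infty); \] in particular $\gamma^B_{2,1}=\lim_{n\to\infty}\mathbf{EL}^B_{n,2,1}/n=\frac{8}{11}$.
   Context: Let $(\epsilon_{ij})_{i,j\ge1}$ be independent random variables with $\Pr(\epsilon_{ij}=1)=\Pr(\epsilon_{ij}=0)=1/2$. For $n\ge1$ and an integer $r\ge1$, let $\mathbf{R}_{n,r}$ be the largest $m$ such that there exist indices $1\le i_1<\dots<i_m\le n$ and $1\le j_1<\dots<j_m\le n$ with $\epsilon_{i_aj_a}=1$ and $|i_a-j_a|\le r$ for all $a$. Define $\mathbf{EL}^B_{n,2,r}=\mathbb{E}\,\mathbf{R}_{n,r}$. *)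

theory Defs
  imports Complex_Main "HOL-Library.Landau_Symbols"
begin

text \<open>A configuration of the Bernoulli variables relevant for size n:
  e i j = True means epsilon_ij = 1; entries outside [1,n]x[1,n] are fixed to False
  (they do not influence R_{n,r}), so uniform averaging over this finite set is the
  expectation with respect to i.i.d. fair Bernoulli variables.\<close>
definition configs :: "nat \<Rightarrow> (nat \<Rightarrow> nat \<Rightarrow> bool) set" where
  "configs n = {e. \<forall>i j. e i j \<longrightarrow> 1 \<le> i \<and> i \<le> n \<and> 1 \<le> j \<and> j \<le> n}"

definition valid_match :: "nat \<Rightarrow> nat \<Rightarrow> (nat \<Rightarrow> nat \<Rightarrow> bool) \<Rightarrow> (nat \<times> nat) list \<Rightarrow> bool" where
  "valid_match n r e ps \<longleftrightarrow>
     sorted_wrt (\<lambda>p q. fst p < fst q \<and> snd p < snd q) ps \<and>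
     (\<forall>p\<in>set ps. 1 \<le> fst p \<and> fst p \<le> n \<and> 1 \<le> snd p \<and> snd p \<le> n \<and>
        e (fst p) (snd p) \<and> \<bar>int (fst p) - int (snd p)\<bar> \<le> int r)"

definition R :: "nat \<Rightarrow> nat \<Rightarrow> (nat \<Rightarrow> nat \<Rightarrow> bool) \<Rightarrow> nat" where
  "R n r e = Max {length ps | ps. valid_match n r e ps}"

definition EL :: "nat \<Rightarrow> nat \<Rightarrow> real" where
  "EL n r = (\<Sum>e\<in>configs n. real (R n r e)) / real (card (configs n))"

end

(*
  R_{n,1} is computed by the longest-chain recursion restricted to the band |i - j| <= 1.
  Along the diagonal that recursion is captured by the diagonal value together with two
  flags saying whether the entries (i, i+1) and (i+1, i) exceed it by one.  The flags form
  a Markov chain driven by the fresh fair entries (i+1,i+1), (i+1,i+2), (i+2,i+1), and the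
  diagonal value grows by one unless both flags are off and the new diagonal entry is 0;
  hence EL_{n,2,1} = sum_{i<n} (1 - p_i / 2), with p_i the probability that both flags are
  off.  The chain is symmetric in the two flags, so p_i and the probability q_i that both are
  on satisfy an affine recursion with fixed point (6/11, 1/11).  Its linear part has complex
  eigenvalues of modulus 1/4 and scales the quadratic form 2u^2 + 2uv + 4v^2 by exactly 1/16,
  so the deviation from 8n/11 - 32/121 is O(4^-n).
*)
theory Submission
  imports Defs
begin

definition match_cell :: "nat \<Rightarrow> (nat \<Rightarrow> nat \<Rightarrow> bool) \<Rightarrow> nat \<Rightarrow> nat \<Rightarrow> bool" where
  "match_cell r e i j \<longleftrightarrow> e i j \<and> i \<le> j + r \<and> j \<le> i + r"

fun max_match :: "nat \<Rightarrow> (nat \<Rightarrow> nat \<Rightarrow> bool) \<Rightarrow> nat \<Rightarrow> nat \<Rightarrow> nat" where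
  "max_match r e 0 j = 0"
| "max_match r e (Suc i) 0 = 0"
| "max_match r e (Suc i) (Suc j) =
     max (max (max_match r e i (Suc j)) (max_match r e (Suc i) j))
         (max_match r e i j + of_bool (match_cell r e (Suc i) (Suc j)))"

lemma max_match_mono:
  assumes "i \<le> i'" "j \<le> j'"
  shows "max_match r e i j \<le> max_match r e i' j'"
proof -
  have Suc_left: "max_match r e k l \<le> max_match r e (Suc k) l" for k l
    by (cases k; cases l) auto
  have Suc_right: "max_match r e k l \<le> max_match r e k (Suc l)" for k l
    by (cases k) auto
  have "max_match r e i j \<le> max_match r e i' j"
    using lift_Suc_mono_le[of "\<lambda>k. max_match r e k j", OF Suc_left assms(1)] .
  also have "\<dots> \<le> max_match r e i' j'"
    using lift_Suc_mono_le[of "\<lambda>l. max_match r e i' l", OF Suc_right assms(2)] .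
  finally show ?thesis .
qed

lemma max_match_right_of_band:
  "i + r \<le> j \<Longrightarrow> max_match r e i (Suc j) = max_match r e i j"
proof (induction i arbitrary: j)
  case (Suc i)
  then obtain j' where "j = Suc j'" by (cases j) auto
  moreover have "max_match r e i j \<le> max_match r e (Suc i) j"
    by (rule max_match_mono) auto
  ultimately show ?case
    using Suc by (simp add: match_cell_def max_def)
qed simp

lemma max_match_below_band:
  "j + r \<le> i \<Longrightarrow> max_match r e (Suc i) j = max_match r e i j"
proof (induction j arbitrary: i)
  case 0
  then show ?case by (cases i) auto
next
  case (Suc j)
  then obtain i' where "i = Suc i'" by (cases i) auto
  moreover have "max_match r e i j \<le> max_match r e i (Suc j)"
    by (rule max_match_mono) auto
  ultimately show ?case
    using Suc by (simp add: match_cell_def max_def)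
qed

definition increasing_pairs :: "(nat \<times> nat) list \<Rightarrow> bool" where
  "increasing_pairs ps \<longleftrightarrow> sorted_wrt (\<lambda>p q. fst p < fst q \<and> snd p < snd q) ps"

definition matching_in :: "nat \<Rightarrow> (nat \<Rightarrow> nat \<Rightarrow> bool) \<Rightarrow> nat \<Rightarrow> nat \<Rightarrow> (nat \<times> nat) list \<Rightarrow> bool" where
  "matching_in r e i j ps \<longleftrightarrow> increasing_pairs ps \<and>
     (\<forall>(a, b)\<in>set ps. 1 \<le> a \<and> a \<le> i \<and> 1 \<le> b \<and> b \<le> j \<and> match_cell r e a b)"

lemma matching_in_mono:
  "matching_in r e i j ps \<Longrightarrow> i \<le> i' \<Longrightarrow> j \<le> j' \<Longrightarrow> matching_in r e i' j' ps"
  by (fastforce simp: matching_in_def)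

lemma matching_in_snoc:
  "matching_in r e i j (ps @ [(a, b)]) \<longleftrightarrow>
     matching_in r e (a - 1) (b - 1) ps \<and> 1 \<le> a \<and> a \<le> i \<and> 1 \<le> b \<and> b \<le> j \<and> match_cell r e a b"
  by (fastforce simp: matching_in_def increasing_pairs_def sorted_wrt_append)

lemma length_le_max_match:
  "matching_in r e i j ps \<Longrightarrow> length ps \<le> max_match r e i j"
proof (induction ps arbitrary: i j rule: rev_induct)
  case (snoc p ps)
  obtain a b where p: "p = (Suc a, Suc b)"
    using snoc.prems by (cases p) (auto simp: matching_in_snoc dest!: Suc_le_D)
  have "length ps \<le> max_match r e a b"
    using snoc by (simp add: p matching_in_snoc)
  also have "\<dots> < max_match r e (Suc a) (Suc b)"
    using snoc.prems by (simp add: p matching_in_snoc)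
  also have "\<dots> \<le> max_match r e i j"
    using snoc.prems by (intro max_match_mono) (simp_all add: p matching_in_snoc)
  finally show ?case by simp
qed simp

lemma max_match_attained:
  "\<exists>ps. matching_in r e i j ps \<and> length ps = max_match r e i j"
proof (induction r e i j rule: max_match.induct)
  case (3 r e i j)
  have w1: "\<exists>ps. matching_in r e (Suc i) (Suc j) ps \<and> length ps = max_match r e i (Suc j)"
    using "3.IH"(1) by (metis matching_in_mono le_Suc_eq order_refl)
  have w2: "\<exists>ps. matching_in r e (Suc i) (Suc j) ps \<and> length ps = max_match r e (Suc i) j"
    using "3.IH"(2) by (metis matching_in_mono le_Suc_eq order_refl)
  have w3: "\<exists>ps. matching_in r e (Suc i) (Suc j) ps \<and>
              length ps = max_match r e i j + of_bool (match_cell r e (Suc i) (Suc j))"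
  proof -
    obtain ps where ps: "matching_in r e i j ps" "length ps = max_match r e i j"
      using "3.IH"(3) by blast
    show ?thesis
    proof (cases "match_cell r e (Suc i) (Suc j)")
      case True
      then show ?thesis
        using ps by (intro exI[of _ "ps @ [(Suc i, Suc j)]"]) (simp add: matching_in_snoc)
    next
      case False
      then show ?thesis
        using ps matching_in_mono[OF ps(1), of "Suc i" "Suc j"] by auto
    qed
  qed
  show ?case
    unfolding max_match.simps max_def using w1 w2 w3 by presburger
qed (auto simp: matching_in_def increasing_pairs_def)

lemma R_eq_max_match: "R n r e = max_match r e n n"
proof -
  have "valid_match n r e = matching_in r e n n"
    by (fastforce simp: fun_eq_iff valid_match_def matching_in_def increasing_pairs_def match_cell_def)
  then have "{length ps | ps. valid_match n r e ps} = {length ps | ps. matching_in r e n n ps}"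
    by simp
  also have "Max \<dots> = max_match r e n n"
    using length_le_max_match max_match_attained[of r e n n]
    by (intro Max_eqI) (auto intro: finite_subset[of _ "{..max_match r e n n}"] simp: eq_commute)
  finally show ?thesis unfolding R_def .
qed

fun band_gain :: "bool \<times> bool \<Rightarrow> bool \<Rightarrow> bool" where
  "band_gain (u, l) x \<longleftrightarrow> u \<or> l \<or> x"

fun band_step :: "bool \<times> bool \<Rightarrow> bool \<Rightarrow> bool \<Rightarrow> bool \<Rightarrow> bool \<times> bool" where
  "band_step (u, l) x y z = (if band_gain (u, l) x then (u \<and> y, l \<and> z) else (y, z))"

fun band_state :: "(nat \<Rightarrow> nat \<Rightarrow> bool) \<Rightarrow> nat \<Rightarrow> bool \<times> bool" where
  "band_state e 0 = (False, False)"
| "band_state e (Suc i) =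
     band_step (band_state e i) (e (Suc i) (Suc i)) (e (Suc i) (Suc (Suc i))) (e (Suc (Suc i)) (Suc i))"

lemma max_match_off_diagonal:
  "max_match 1 e i (Suc i) = max_match 1 e i i + of_bool (fst (band_state e i)) \<and>
   max_match 1 e (Suc i) i = max_match 1 e i i + of_bool (snd (band_state e i))"
proof (induction i)
  case (Suc i)
  obtain u l where s: "band_state e i = (u, l)"
    by fastforce
  have "max_match 1 e i (Suc (Suc i)) = max_match 1 e i (Suc i)"
    by (rule max_match_right_of_band) simp
  moreover have "max_match 1 e (Suc (Suc i)) i = max_match 1 e (Suc i) i"
    by (rule max_match_below_band) simp
  ultimately show ?case
    using Suc s by (simp add: match_cell_def max_def)
qed simp

lemma max_match_diagonal_Suc:
  "max_match 1 e (Suc i) (Suc i) =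
     max_match 1 e i i + of_bool (band_gain (band_state e i) (e (Suc i) (Suc i)))"
  using max_match_off_diagonal[of e i]
  by (cases "band_state e i") (simp add: match_cell_def max_def)

lemma max_match_diagonal_sum:
  "real (max_match 1 e n n) = (\<Sum>i<n. of_bool (band_gain (band_state e i) (e (Suc i) (Suc i))))"
proof (induction n)
  case (Suc n)
  show ?case
    by (simp only: max_match_diagonal_Suc sum.lessThan_Suc of_nat_add Suc.IH of_nat_of_bool)
qed simp

lemma band_state_local:
  assumes "\<And>a b. a \<le> Suc i \<Longrightarrow> b \<le> Suc i \<Longrightarrow> (a, b) \<noteq> (Suc i, Suc i) \<Longrightarrow> e' a b = e a b"
  shows "band_state e' i = band_state e i"
  using assms by (induction i) simp_all

definition mean :: "nat \<Rightarrow> ((nat \<Rightarrow> nat \<Rightarrow> bool) \<Rightarrow> real) \<Rightarrow> real" where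
  "mean n F = (\<Sum>e\<in>configs n. F e) / real (card (configs n))"

lemma EL_eq_mean: "EL n r = mean n (\<lambda>e. real (R n r e))"
  by (simp add: EL_def mean_def)

lemma finite_configs: "finite (configs n)"
proof (rule finite_subset)
  show "configs n \<subseteq> (\<lambda>S i j. (i, j) \<in> S) ` Pow ({1..n} \<times> {1..n})"
  proof
    fix e assume "e \<in> configs n"
    then have "e = (\<lambda>i j. (i, j) \<in> {p \<in> {1..n} \<times> {1..n}. e (fst p) (snd p)})"
      by (auto simp: configs_def fun_eq_iff)
    then show "e \<in> (\<lambda>S i j. (i, j) \<in> S) ` Pow ({1..n} \<times> {1..n})"
      by blast
  qed
qed simp

lemma card_configs_pos: "card (configs n) > 0"
proof -
  have "(\<lambda>_ _. False) \<in> configs n"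
    by (simp add: configs_def)
  then show ?thesis
    using finite_configs card_gt_0_iff by blast
qed

lemma mean_const [simp]: "mean n (\<lambda>_. c) = c"
  using card_configs_pos[of n] by (simp add: mean_def)

lemma mean_add: "mean n (\<lambda>e. F e + G e) = mean n F + mean n G"
  by (simp add: mean_def sum.distrib add_divide_distrib)

lemma mean_cmult: "mean n (\<lambda>e. c * F e) = c * mean n F"
  by (simp add: mean_def sum_distrib_left)

lemma mean_sum: "mean n (\<lambda>e. \<Sum>i\<in>I. F i e) = (\<Sum>i\<in>I. mean n (F i))"
  by (simp add: mean_def sum.swap[of _ I] sum_divide_distrib)

lemma mean_cong: "(\<And>e. e \<in> configs n \<Longrightarrow> F e = G e) \<Longrightarrow> mean n F = mean n G"
  by (simp add: mean_def cong: sum.cong)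

definition set_entry :: "(nat \<Rightarrow> nat \<Rightarrow> bool) \<Rightarrow> nat \<Rightarrow> nat \<Rightarrow> bool \<Rightarrow> nat \<Rightarrow> nat \<Rightarrow> bool" where
  "set_entry e a b v = (\<lambda>i j. if i = a \<and> j = b then v else e i j)"

lemma set_entry_apply: "set_entry e a b v i j = (if i = a \<and> j = b then v else e i j)"
  by (simp add: set_entry_def)

lemma set_entry_triv [simp]: "v = e a b \<Longrightarrow> set_entry e a b v = e"
  by (auto simp: set_entry_def)

lemma set_entry_set_entry [simp]: "set_entry (set_entry e a b v) a b w = set_entry e a b w"
  by (simp add: set_entry_def fun_eq_iff)

lemma sum_configs_flip_entry:
  assumes "a \<in> {1..n}" "b \<in> {1..n}"
  shows "(\<Sum>e\<in>configs n. F e) = (\<Sum>e\<in>configs n. F (set_entry e a b (\<not> e a b)))"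
  using assms
  by (intro sum.reindex_bij_witness[where i="\<lambda>e. set_entry e a b (\<not> e a b)"
                                    and j="\<lambda>e. set_entry e a b (\<not> e a b)"])
     (auto simp: set_entry_apply configs_def)

lemma mean_resample_entry:
  assumes "a \<in> {1..n}" "b \<in> {1..n}"
  shows "mean n F = mean n (\<lambda>e. (F (set_entry e a b True) + F (set_entry e a b False)) / 2)"
proof -
  have "F (set_entry e a b True) + F (set_entry e a b False) = F e + F (set_entry e a b (\<not> e a b))"
    for e
    by (cases "e a b") simp_all
  then have "mean n (\<lambda>e. (F (set_entry e a b True) + F (set_entry e a b False)) / 2)
      = (mean n F + mean n (\<lambda>e. F (set_entry e a b (\<not> e a b)))) / 2"
    using mean_cmult[of n "1/2"] by (simp add: mean_add)
  also have "mean n (\<lambda>e. F (set_entry e a b (\<not> e a b))) = mean n F"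
    using sum_configs_flip_entry[OF assms, of F] by (simp add: mean_def)
  finally show ?thesis
    by simp
qed

lemma mean_fresh_entry:
  assumes "a \<in> {1..n}" "b \<in> {1..n}" "\<And>e v. \<Phi> (set_entry e a b v) = \<Phi> e"
  shows "mean n (\<lambda>e. K (\<Phi> e) (e a b)) = mean n (\<lambda>e. (K (\<Phi> e) True + K (\<Phi> e) False) / 2)"
  using mean_resample_entry[OF assms(1,2), of "\<lambda>e. K (\<Phi> e) (e a b)"]
  by (simp add: assms(3) set_entry_apply)

definition band_transition :: "(bool \<times> bool \<Rightarrow> real) \<Rightarrow> bool \<times> bool \<Rightarrow> real" where
  "band_transition G s = (\<Sum>x\<in>UNIV. \<Sum>y\<in>UNIV. \<Sum>z\<in>UNIV. G (band_step s x y z)) / 8"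

lemma band_transition_expand:
  "band_transition G s =
     (G (band_step s False False False) + G (band_step s False False True)
      + G (band_step s False True False) + G (band_step s False True True)
      + G (band_step s True False False) + G (band_step s True False True)
      + G (band_step s True True False) + G (band_step s True True True)) / 8"
  by (simp add: band_transition_def UNIV_bool)

lemma mean_band_state_Suc:
  assumes "Suc (Suc i) \<le> n"
  shows "mean n (\<lambda>e. G (band_state e (Suc i))) = mean n (\<lambda>e. band_transition G (band_state e i))"
proof -
  let ?a = "Suc i" and ?b = "Suc (Suc i)"
  have fresh: "band_state (set_entry e a b v) i = band_state e i"
    if "(a, b) \<in> {(?a, ?a), (?a, ?b), (?b, ?a)}" for e a b v
    using that by (intro band_state_local) (auto simp: set_entry_apply)
  have ab: "?a \<in> {1..n}" "?b \<in> {1..n}"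
    using assms by auto
  define K1 where "K1 = (\<lambda>(s, y, z) x. G (band_step s x y z))"
  define K2 where "K2 = (\<lambda>(s, z) y. (K1 (s, y, z) True + K1 (s, y, z) False) / 2)"
  define K3 where "K3 = (\<lambda>s z. (K2 (s, z) True + K2 (s, z) False) / 2)"
  have "mean n (\<lambda>e. G (band_state e (Suc i)))
      = mean n (\<lambda>e. K1 (band_state e i, e ?a ?b, e ?b ?a) (e ?a ?a))"
    by (simp add: K1_def)
  also have "\<dots> = mean n (\<lambda>e. (K1 (band_state e i, e ?a ?b, e ?b ?a) True
                                + K1 (band_state e i, e ?a ?b, e ?b ?a) False) / 2)"
    by (rule mean_fresh_entry) (use ab fresh in \<open>simp_all add: set_entry_apply\<close>)
  also have "\<dots> = mean n (\<lambda>e. K2 (band_state e i, e ?b ?a) (e ?a ?b))"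
    by (simp add: K2_def)
  also have "\<dots> = mean n (\<lambda>e. (K2 (band_state e i, e ?b ?a) True + K2 (band_state e i, e ?b ?a) False) / 2)"
    by (rule mean_fresh_entry) (use ab fresh in \<open>simp_all add: set_entry_apply\<close>)
  also have "\<dots> = mean n (\<lambda>e. K3 (band_state e i) (e ?b ?a))"
    by (simp add: K3_def)
  also have "\<dots> = mean n (\<lambda>e. (K3 (band_state e i) True + K3 (band_state e i) False) / 2)"
    by (rule mean_fresh_entry) (use ab fresh in simp_all)
  also have "\<dots> = mean n (\<lambda>e. band_transition G (band_state e i))"
    by (rule mean_cong) (simp add: K1_def K2_def K3_def band_transition_expand field_simps)
  finally show ?thesis .
qed

fun prob_none :: "nat \<Rightarrow> real" and prob_both :: "nat \<Rightarrow> real" where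
  "prob_none 0 = 1"
| "prob_both 0 = 0"
| "prob_none (Suc i) = 1/2 + prob_none i / 8 - prob_both i / 4"
| "prob_both (Suc i) = prob_none i / 8 + prob_both i / 4"

lemma mean_band_state_fun:
  assumes "Suc i \<le> n" "H (True, False) = H (False, True)"
  shows "mean n (\<lambda>e. H (band_state e i)) = H (True, False)
           + (H (False, False) - H (True, False)) * prob_none i
           + (H (True, True) - H (True, False)) * prob_both i"
  using assms
proof (induction i arbitrary: H)
  case (Suc i)
  have "mean n (\<lambda>e. H (band_state e (Suc i))) = mean n (\<lambda>e. band_transition H (band_state e i))"
    using Suc.prems(1) by (rule mean_band_state_Suc)
  also have "\<dots> = band_transition H (True, False)
           + (band_transition H (False, False) - band_transition H (True, False)) * prob_none i
           + (band_transition H (True, True) - band_transition H (True, False)) * prob_both i"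
    using Suc.prems by (intro Suc.IH) (simp_all add: band_transition_expand)
  also have "\<dots> = H (True, False)
           + (H (False, False) - H (True, False)) * prob_none (Suc i)
           + (H (True, True) - H (True, False)) * prob_both (Suc i)"
    using Suc.prems(2) by (simp add: band_transition_expand field_simps)
  finally show ?case .
qed simp

lemma mean_band_gain:
  assumes "Suc i \<le> n"
  shows "mean n (\<lambda>e. of_bool (band_gain (band_state e i) (e (Suc i) (Suc i)))) = 1 - prob_none i / 2"
proof -
  have "mean n (\<lambda>e. of_bool (band_gain (band_state e i) (e (Suc i) (Suc i))))
      = mean n (\<lambda>e. (of_bool (band_gain (band_state e i) True) + of_bool (band_gain (band_state e i) False)) / 2)"
    using assms by (intro mean_fresh_entry) (auto intro: band_state_local simp: set_entry_apply)
  also have "\<dots> = 1 - prob_none i / 2"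
    using assms by (subst mean_band_state_fun) simp_all
  finally show ?thesis .
qed

lemma EL_1_eq_sum: "EL n 1 = (\<Sum>i<n. 1 - prob_none i / 2)"
proof -
  have "EL n 1 = mean n (\<lambda>e. \<Sum>i<n. of_bool (band_gain (band_state e i) (e (Suc i) (Suc i))))"
    by (simp only: EL_eq_mean R_eq_max_match max_match_diagonal_sum)
  also have "\<dots> = (\<Sum>i<n. 1 - prob_none i / 2)"
    by (simp only: mean_sum) (simp add: mean_band_gain)
  finally show ?thesis .
qed

lemma EL_1_deviation:
  "EL n 1 - (8/11 * real n - 32/121) = 6/11 * (prob_none n - 6/11) - 2/11 * (prob_both n - 1/11)"
  unfolding EL_1_eq_sum by (induction n) (simp_all add: field_simps)

lemma prob_quadratic_form:
  "2 * (prob_none n - 6/11)\<^sup>2 + 2 * (prob_none n - 6/11) * (prob_both n - 1/11)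
     + 4 * (prob_both n - 1/11)\<^sup>2 = 4/11 * (1/16)^n"
proof (induction n)
  case (Suc n)
  define u where "u = prob_none n - 6/11"
  define v where "v = prob_both n - 1/11"
  have "prob_none (Suc n) - 6/11 = u/8 - v/4" "prob_both (Suc n) - 1/11 = u/8 + v/4"
    by (simp_all add: u_def v_def field_simps)
  moreover have "2 * (u/8 - v/4)\<^sup>2 + 2 * (u/8 - v/4) * (u/8 + v/4) + 4 * (u/8 + v/4)\<^sup>2
      = (2 * u\<^sup>2 + 2 * u * v + 4 * v\<^sup>2) / 16"
    by (simp add: power2_eq_square algebra_simps)
  ultimately show ?case
    using Suc by (simp add: u_def v_def)
qed (simp add: power2_eq_square)

lemma abs_EL_1_deviation_le: "\<bar>EL n 1 - (8/11 * real n - 32/121)\<bar> \<le> (1/4)^n"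
proof -
  define u where "u = prob_none n - 6/11"
  define v where "v = prob_both n - 1/11"
  have "(6 * u - 2 * v)\<^sup>2 \<le> 26 * (2 * u\<^sup>2 + 2 * u * v + 4 * v\<^sup>2)"
  proof -
    have "0 \<le> (4 * u + 19/2 * v)\<^sup>2 + 39/4 * v\<^sup>2"
      by simp
    then show ?thesis
      by (simp add: power2_eq_square algebra_simps)
  qed
  also have "\<dots> = 26 * (4/11 * (1/16)^n)"
    using prob_quadratic_form[of n] by (simp add: u_def v_def)
  also have "\<dots> \<le> 121 * ((1/4)^n)\<^sup>2"
  proof -
    have "((1/4::real)^n)\<^sup>2 = (1/16)^n"
      by (simp add: power2_eq_square flip: power_mult_distrib)
    then show ?thesis
      by simp
  qed
  finally have "((6 * u - 2 * v) / 11)\<^sup>2 \<le> ((1/4)^n)\<^sup>2"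
    by (simp add: power_divide)
  then show ?thesis
    unfolding EL_1_deviation u_def[symmetric] v_def[symmetric]
    using abs_le_square_iff[of "(6 * u - 2 * v) / 11" "(1/4::real)^n"] by simp
qed

lemma bigo_mult_n_of_abs_le_power:
  fixes f :: "nat \<Rightarrow> real"
  assumes "\<And>n. \<bar>f n\<bar> \<le> c ^ n"
  shows "f \<in> O(\<lambda>n. real n * c ^ n)"
proof (rule bigoI[where c=1])
  show "\<forall>\<^sub>F n in at_top. norm (f n) \<le> 1 * norm (real n * c ^ n)"
    using eventually_ge_at_top[of "1::nat"]
  proof (rule eventually_mono)
    fix n :: nat
    assume "1 \<le> n"
    have "0 \<le> c ^ n"
      using assms[of n] by linarith
    then have "c ^ n \<le> real n * c ^ n"
      using \<open>1 \<le> n\<close> mult_right_mono[of 1 "real n" "c ^ n"] by simp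
    with \<open>0 \<le> c ^ n\<close> show "norm (f n) \<le> 1 * norm (real n * c ^ n)"
      using assms[of n] by simp
  qed
qed

lemma LIMSEQ_divide_of_bounded_deviation:
  fixes f :: "nat \<Rightarrow> real"
  assumes "\<And>n. \<bar>f n - a * real n\<bar> \<le> C"
  shows "(\<lambda>n. f n / real n) \<longlonglongrightarrow> a"
proof -
  have "(\<lambda>n. (f n - a * real n) / real n) \<longlonglongrightarrow> 0"
  proof (rule tendsto_0_le[where K=1])
    show "(\<lambda>n. C / real n) \<longlonglongrightarrow> 0"
      by (rule lim_const_over_n)
    show "\<forall>\<^sub>F n in sequentially. norm ((f n - a * real n) / real n) \<le> norm (C / real n) * 1"
    proof (intro always_eventually allI)
      fix n
      have "\<bar>f n - a * real n\<bar> \<le> \<bar>C\<bar>"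
        using assms[of n] by linarith
      then show "norm ((f n - a * real n) / real n) \<le> norm (C / real n) * 1"
        by (simp add: divide_right_mono)
    qed
  qed
  then have "(\<lambda>n. a + (f n - a * real n) / real n) \<longlonglongrightarrow> a"
    using tendsto_add_const_iff[of a "\<lambda>n. (f n - a * real n) / real n" 0] by simp
  moreover have "\<forall>\<^sub>F n in sequentially. a + (f n - a * real n) / real n = f n / real n"
    using eventually_ge_at_top[of "1::nat"] by eventually_elim (simp add: field_simps)
  ultimately show ?thesis
    by (rule Lim_transform_eventually)
qed

theorem mainTheorem3:
  shows "(\<lambda>n. EL n 1 - (8/11 * real n - 32/121)) \<in> O(\<lambda>n. real n * 2 powr (- 2 * real n))
         \<and> (\<lambda>n. EL n 1 / real n) \<longlonglongrightarrow> 8/11"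
proof
  have "2 powr (- 2 * real n) = (1/4 :: real) ^ n" for n
    by (simp add: powr_minus powr_realpow power_mult power_one_over inverse_eq_divide flip: powr_powr)
  then show "(\<lambda>n. EL n 1 - (8/11 * real n - 32/121)) \<in> O(\<lambda>n. real n * 2 powr (- 2 * real n))"
    using abs_EL_1_deviation_le by (simp add: bigo_mult_n_of_abs_le_power)
  have "\<bar>EL n 1 - 8/11 * real n\<bar> \<le> 1 + 32/121" for n
    using abs_EL_1_deviation_le[of n] power_le_one[of "1/4 :: real" n] by linarith
  then show "(\<lambda>n. EL n 1 / real n) \<longlonglongrightarrow> 8/11"
    by (rule LIMSEQ_divide_of_bounded_deviation)
qed

end
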